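(* Let $G$ be a group of order $9$ acting on $\mathbb P^1\times\mathbb P^1\times\mathbb P^1$ (over $\mathbb C$) such that the action is free outside a finite subset. If $G$ permutes the three factors of $\mathbb P^1\times\mathbb P^1\times\mathbb P^1$ nontrivially, then $G\cong\mathbb Z_9$ and there are affine coordinates $x,y,z$ on the three copies of $\mathbb P^1$ such that a generator $g$ of $G$ acts by $g\colon(x,y,z)\mapsto(y,z,\omega x)$, where $\omega$ is a primitive cube root of $1$.
   Context: The action is by automorphisms; "free outside a finite subset" means that the set of points with nontrivial stabilizer is finite. Any automorphism of $\mathbb P^1\times\mathbb P^1\times\mathbb P^1$ permutes the three projections, giving a homomorphism to the symmetric group $S_3$; "permutes the factors nontrivially" means this homomorphism is nontrivial on $G$. *)

theory Defs
  imports Complex_Main "HOL-Algebra.Algebra"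
begin

datatype P1 = Fin complex | Inf

fun mob :: "complex \<Rightarrow> complex \<Rightarrow> complex \<Rightarrow> complex \<Rightarrow> P1 \<Rightarrow> P1" where
  "mob a b c d (Fin z) = (if c * z + d = 0 then Inf else Fin ((a * z + b) / (c * z + d)))"
| "mob a b c d Inf = (if c = 0 then Inf else Fin (a / c))"

definition is_mobius :: "(P1 \<Rightarrow> P1) \<Rightarrow> bool" where
  "is_mobius f \<longleftrightarrow> (\<exists>a b c d. a * d - b * c \<noteq> 0 \<and> f = mob a b c d)"

type_synonym P1cube = "P1 \<times> P1 \<times> P1"

definition coord :: "P1cube \<Rightarrow> nat \<Rightarrow> P1" where
  "coord p i = (if i = 0 then fst p else if i = 1 then fst (snd p) else snd (snd p))"

definition aut_with_perm :: "(P1cube \<Rightarrow> P1cube) \<Rightarrow> (nat \<Rightarrow> nat) \<Rightarrow> bool" where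
  "aut_with_perm F \<sigma> \<longleftrightarrow> \<sigma> permutes {0, 1, 2} \<and>
     (\<exists>m0 m1 m2. is_mobius m0 \<and> is_mobius m1 \<and> is_mobius m2 \<and>
        (\<forall>p. F p = (m0 (coord p (\<sigma> 0)), m1 (coord p (\<sigma> 1)), m2 (coord p (\<sigma> 2)))))"

definition is_aut :: "(P1cube \<Rightarrow> P1cube) \<Rightarrow> bool" where
  "is_aut F \<longleftrightarrow> (\<exists>\<sigma>. aut_with_perm F \<sigma>)"

definition aut_action :: "('g, 'b) monoid_scheme \<Rightarrow> ('g \<Rightarrow> P1cube \<Rightarrow> P1cube) \<Rightarrow> bool" where
  "aut_action G \<phi> \<longleftrightarrow> (\<forall>g\<in>carrier G. is_aut (\<phi> g)) \<and> \<phi> \<one>\<^bsub>G\<^esub> = id \<and>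
     (\<forall>g\<in>carrier G. \<forall>h\<in>carrier G. \<phi> (g \<otimes>\<^bsub>G\<^esub> h) = \<phi> g \<circ> \<phi> h)"

definition free_outside_finite :: "('g, 'b) monoid_scheme \<Rightarrow> ('g \<Rightarrow> P1cube \<Rightarrow> P1cube) \<Rightarrow> bool" where
  "free_outside_finite G \<phi> \<longleftrightarrow>
     finite {p. \<exists>g\<in>carrier G. g \<noteq> \<one>\<^bsub>G\<^esub> \<and> \<phi> g p = p}"

definition permutes_factors_nontrivially :: "('g, 'b) monoid_scheme \<Rightarrow> ('g \<Rightarrow> P1cube \<Rightarrow> P1cube) \<Rightarrow> bool" where
  "permutes_factors_nontrivially G \<phi> \<longleftrightarrow>
     (\<exists>g\<in>carrier G. \<exists>\<sigma>. aut_with_perm (\<phi> g) \<sigma> \<and> \<sigma> \<noteq> id)"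

definition model_map :: "complex \<Rightarrow> P1cube \<Rightarrow> P1cube" where
  "model_map \<omega> p = (case p of (x, y, z) \<Rightarrow> (y, z, mob \<omega> 0 0 1 x))"

end

theory Submission
  imports Defs
begin

(* Pick g whose automorphism permutes the factors nontrivially. As (\<phi> g)^9 = id, the permutation
  is a 3-cycle, so after replacing g by g^2 if necessary, \<phi> g has the form
  (x, y, z) \<mapsto> (m0 y, m1 z, m2 x) with Moebius maps m0, m1, m2. Its cube acts on the first factor
  by the return map T = m0 m1 m2, and T^3 = id. If T = id, then \<phi> g would fix every point of the
  curve {(x, m1 (m2 x), m2 x)}, contradicting freeness; hence (\<phi> g)^3 \<noteq> id, g has order 9 and G is
  cyclic. A Moebius map of finite order fixes a point, so it is conjugate to an affine map and
  then to z \<mapsto> \<omega> z with \<omega>^3 = 1, \<omega> \<noteq> 1. If \<mu> conjugates T in this way, the coordinate change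
  (\<mu>, \<mu> m0, \<mu> m0 m1) turns \<phi> g into (x, y, z) \<mapsto> (y, z, \<omega> x). *)

section \<open>Moebius transformations\<close>

lemma funpow_semiconj:
  assumes "\<And>x. h (f x) = g (h x)"
  shows "h ((f ^^ n) x) = (g ^^ n) (h x)"
  by (induction n) (simp_all add: assms)

lemma mob_mob:
  assumes "a' * d' - b' * c' \<noteq> 0"
  shows "mob a b c d (mob a' b' c' d' p) =
         mob (a * a' + b * c') (a * b' + b * d') (c * a' + d * c') (c * b' + d * d') p"
proof (cases p)
  case Inf
  show ?thesis
  proof (cases "c' = 0")
    case True
    with assms have "a' \<noteq> 0" by auto
    with Inf True show ?thesis by auto
  next
    case False
    then have "c * a' / c' + d = (c * a' + d * c') / c'" "a * a' / c' + b = (a * a' + b * c') / c'"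
      by (simp_all add: field_simps)
    with Inf False show ?thesis by auto
  qed
next
  case (Fin z)
  have den: "(c * a' + d * c') * z + (c * b' + d * d') = c * (a' * z + b') + d * (c' * z + d')"
   and num: "(a * a' + b * c') * z + (a * b' + b * d') = a * (a' * z + b') + b * (c' * z + d')"
    by (simp_all add: algebra_simps)
  show ?thesis
  proof (cases "c' * z + d' = 0")
    case True
    have "a' * d' - b' * c' = a' * (c' * z + d') - c' * (a' * z + b')"
      by (simp add: algebra_simps)
    with assms True have "a' * z + b' \<noteq> 0" by auto
    with Fin True show ?thesis by (auto simp: den num)
  next
    case False
    then have
      "c * ((a' * z + b') / (c' * z + d')) + d = (c * (a' * z + b') + d * (c' * z + d')) / (c' * z + d')"
      "a * ((a' * z + b') / (c' * z + d')) + b = (a * (a' * z + b') + b * (c' * z + d')) / (c' * z + d')"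
      by (simp_all add: field_simps)
    with Fin False show ?thesis by (simp add: den num)
  qed
qed

lemma mob_scalar:
  assumes "k \<noteq> 0"
  shows "mob k 0 0 k = id"
proof
  fix p
  show "mob k 0 0 k p = id p"
    using assms by (cases p) auto
qed

lemma is_mobius_id: "is_mobius id"
  unfolding is_mobius_def using mob_scalar[of 1] by (intro exI[of _ 1] exI[of _ 0]) simp

lemma is_mobius_comp:
  assumes "is_mobius f" "is_mobius g"
  shows "is_mobius (f \<circ> g)"
proof -
  obtain a b c d where f: "a * d - b * c \<noteq> 0" "f = mob a b c d"
    using assms(1) unfolding is_mobius_def by blast
  obtain a' b' c' d' where g: "a' * d' - b' * c' \<noteq> 0" "g = mob a' b' c' d'"
    using assms(2) unfolding is_mobius_def by blast
  have "(a * a' + b * c') * (c * b' + d * d') - (a * b' + b * d') * (c * a' + d * c')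
        = (a * d - b * c) * (a' * d' - b' * c')"
    by (simp add: algebra_simps)
  with f g
  have "(a * a' + b * c') * (c * b' + d * d') - (a * b' + b * d') * (c * a' + d * c') \<noteq> 0"
    by simp
  moreover have
    "f \<circ> g = mob (a * a' + b * c') (a * b' + b * d') (c * a' + d * c') (c * b' + d * d')"
    using f g by (auto simp: mob_mob)
  ultimately show ?thesis
    unfolding is_mobius_def by blast
qed

lemma is_mobius_inverse:
  assumes "is_mobius f"
  obtains h where "is_mobius h" "\<And>x. h (f x) = x" "\<And>x. f (h x) = x"
proof -
  obtain a b c d where det: "a * d - b * c \<noteq> 0" and f: "f = mob a b c d"
    using assms unfolding is_mobius_def by blast
  define h where "h = mob d (- b) (- c) a"
  have det': "d * a - (- b) * (- c) \<noteq> 0"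
    using det by (simp add: algebra_simps)
  have "h (f x) = mob (a * d - b * c) 0 0 (a * d - b * c) x" for x
    using det unfolding h_def f by (simp add: mob_mob algebra_simps)
  moreover have "f (h x) = mob (a * d - b * c) 0 0 (a * d - b * c) x" for x
    using det' unfolding h_def f by (simp add: mob_mob algebra_simps)
  moreover have "is_mobius h"
    unfolding is_mobius_def h_def using det' by blast
  ultimately show thesis
    using that det by (simp add: mob_scalar)
qed

lemma is_mobius_bij:
  assumes "is_mobius f"
  shows "bij f"
proof -
  obtain h where "\<And>x. h (f x) = x" "\<And>x. f (h x) = x"
    using is_mobius_inverse[OF assms] by blast
  then show ?thesis
    by (intro o_bij[of h]) (auto simp: fun_eq_iff)
qed

lemma is_mobius_fixpoint:
  assumes "is_mobius T"
  obtains p where "T p = p"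
proof -
  obtain a b c d where det: "a * d - b * c \<noteq> 0" and T: "T = mob a b c d"
    using assms unfolding is_mobius_def by blast
  show thesis
  proof (cases "c = 0")
    case True
    then show thesis using that[of Inf] T by simp
  next
    case False
    define s where "s = csqrt ((d - a)^2 + 4 * b * c)"
    define z where "z = (a - d + s) / (2 * c)"
    have "4 * c * (a * z + b - z * (c * z + d)) = ((d - a)^2 + 4 * b * c) - s^2"
      unfolding z_def using False by (simp add: field_simps power2_eq_square)
    then have fix_eq: "a * z + b = z * (c * z + d)"
      using False by (simp add: s_def)
    have "c * z + d \<noteq> 0"
    proof
      assume "c * z + d = 0"
      moreover from this fix_eq have "a * z + b = 0" by simp
      moreover have "a * d - b * c = a * (c * z + d) - c * (a * z + b)" by (simp add: algebra_simps)
      ultimately show False using det by simp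
    qed
    with fix_eq show thesis using that[of "Fin z"] T by simp
  qed
qed

lemma is_mobius_maps_to_Inf: "\<exists>\<nu>. is_mobius \<nu> \<and> \<nu> p = Inf"
proof (cases p)
  case (Fin z)
  have "is_mobius (mob 0 1 1 (- z))"
    unfolding is_mobius_def by (intro exI[of _ 0] exI[of _ 1] exI[of _ 1] exI[of _ "-z"]) simp
  with Fin show ?thesis by force
next
  case Inf
  then show ?thesis using is_mobius_id by force
qed

lemma affine_funpow:
  assumes "\<And>z. S (Fin z) = Fin (\<alpha> * z + \<beta>)"
  shows "(S ^^ k) (Fin z) = Fin (\<alpha> ^ k * z + \<beta> * (\<Sum>i<k. \<alpha> ^ i))"
proof (induction k)
  case (Suc k)
  have "(\<Sum>i<Suc k. \<alpha> ^ i) = 1 + \<alpha> * (\<Sum>i<k. \<alpha> ^ i)"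
    by (subst sum.lessThan_Suc_shift) (simp add: sum_distrib_left)
  with Suc show ?case
    by (simp add: assms algebra_simps)
qed simp

lemma mobius_fixing_Inf_finite_order:
  assumes S: "is_mobius S" and S_Inf: "S Inf = Inf" and S_ne_id: "S \<noteq> id"
    and S_n: "S ^^ n = id" and "0 < n"
  obtains \<omega> \<rho> where "\<omega> ^ n = 1" "\<omega> \<noteq> 1" "is_mobius \<rho>" "\<And>x. \<rho> (S x) = mob \<omega> 0 0 1 (\<rho> x)"
proof -
  obtain a b c d where det: "a * d - b * c \<noteq> 0" and S_eq: "S = mob a b c d"
    using S unfolding is_mobius_def by blast
  from S_Inf S_eq have "c = 0" by (auto split: if_splits)
  with det have "d \<noteq> 0" by auto
  define \<alpha> where "\<alpha> = a / d"
  define \<beta> where "\<beta> = b / d"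
  have S_Fin: "S (Fin z) = Fin (\<alpha> * z + \<beta>)" for z
    using \<open>c = 0\<close> \<open>d \<noteq> 0\<close> unfolding S_eq \<alpha>_def \<beta>_def by (simp add: add_divide_distrib)
  have orbit: "Fin (\<alpha> ^ n * z + \<beta> * (\<Sum>i<n. \<alpha> ^ i)) = Fin z" for z
    using affine_funpow[OF S_Fin, of n z] S_n by simp
  from orbit[of 0] have sum_zero: "\<beta> * (\<Sum>i<n. \<alpha> ^ i) = 0" by simp
  with orbit[of 1] have \<alpha>_n: "\<alpha> ^ n = 1" by simp
  have "\<alpha> \<noteq> 1"
  proof
    assume "\<alpha> = 1"
    with sum_zero \<open>0 < n\<close> have "\<beta> = 0" by simp
    with \<open>\<alpha> = 1\<close> have "S x = x" for x
      using S_Inf by (cases x) (simp_all add: S_Fin)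
    with S_ne_id show False by auto
  qed
  define \<gamma> where "\<gamma> = \<beta> / (\<alpha> - 1)"
  \<comment> \<open>\<rho> translates the finite fixed point -\<gamma> of S to 0\<close>
  define \<rho> where "\<rho> = mob 1 \<gamma> 0 1"
  have "is_mobius \<rho>"
    unfolding is_mobius_def \<rho>_def by (intro exI[of _ 1] exI[of _ \<gamma>] exI[of _ 0] exI[of _ 1]) simp
  moreover have "\<rho> (S x) = mob \<alpha> 0 0 1 (\<rho> x)" for x
  proof (cases x)
    case (Fin z)
    have "\<alpha> * z + \<beta> + \<gamma> = \<alpha> * (z + \<gamma>)"
      using \<open>\<alpha> \<noteq> 1\<close> unfolding \<gamma>_def by (simp add: field_simps)
    with Fin show ?thesis by (simp add: S_Fin \<rho>_def add.commute)
  qed (simp add: S_Inf \<rho>_def)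
  ultimately show thesis
    using that \<alpha>_n \<open>\<alpha> \<noteq> 1\<close> by blast
qed

lemma mobius_finite_order:
  assumes T: "is_mobius T" and "T \<noteq> id" and T_n: "T ^^ n = id" and "0 < n"
  obtains \<omega> \<mu> where "\<omega> ^ n = 1" "\<omega> \<noteq> 1" "is_mobius \<mu>" "\<And>x. \<mu> (T x) = mob \<omega> 0 0 1 (\<mu> x)"
proof -
  obtain p where "T p = p"
    using is_mobius_fixpoint[OF T] .
  obtain \<nu> where \<nu>: "is_mobius \<nu>" "\<nu> p = Inf"
    using is_mobius_maps_to_Inf by blast
  obtain \<nu>' where \<nu>': "is_mobius \<nu>'" "\<And>x. \<nu>' (\<nu> x) = x" "\<And>x. \<nu> (\<nu>' x) = x"
    using is_mobius_inverse[OF \<nu>(1)] by blast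
  define S where "S = \<nu> \<circ> T \<circ> \<nu>'"
  have conj: "\<nu> (T x) = S (\<nu> x)" for x
    unfolding S_def by (simp add: \<nu>')
  have "is_mobius S"
    unfolding S_def using \<nu> \<nu>' T by (intro is_mobius_comp)
  moreover have "S Inf = Inf"
    using conj[of p] \<open>T p = p\<close> \<nu> by simp
  moreover have "S \<noteq> id"
  proof
    assume "S = id"
    then have "T x = x" for x
      using conj[of x] \<nu>'(2) by (metis id_apply)
    with \<open>T \<noteq> id\<close> show False by auto
  qed
  moreover have "S ^^ n = id"
  proof
    fix y
    have "(S ^^ n) y = \<nu> ((T ^^ n) (\<nu>' y))"
      using funpow_semiconj[of \<nu> T S, OF conj] \<nu>'(3) by metis
    then show "(S ^^ n) y = id y"
      using T_n \<nu>'(3) by simp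
  qed
  ultimately obtain \<omega> \<rho> where "\<omega> ^ n = 1" "\<omega> \<noteq> 1" "is_mobius \<rho>"
      and \<rho>: "\<And>x. \<rho> (S x) = mob \<omega> 0 0 1 (\<rho> x)"
    using mobius_fixing_Inf_finite_order \<open>0 < n\<close> by blast
  moreover have "(\<rho> \<circ> \<nu>) (T x) = mob \<omega> 0 0 1 ((\<rho> \<circ> \<nu>) x)" for x
    by (simp add: conj \<rho>)
  ultimately show thesis
    using that is_mobius_comp \<nu>(1) by blast
qed

section \<open>Automorphisms of P^1 x P^1 x P^1\<close>

lemma triple_coord: "p = (coord p 0, coord p 1, coord p 2)"
  by (simp add: coord_def)

lemma aut_with_perm_iff_coord:
  "aut_with_perm F \<sigma> \<longleftrightarrow> \<sigma> permutes {0, 1, 2} \<and>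
     (\<exists>M. (\<forall>i. is_mobius (M i)) \<and> (\<forall>p. \<forall>i\<in>{0, 1, 2}. coord (F p) i = M i (coord p (\<sigma> i))))"
proof
  assume "aut_with_perm F \<sigma>"
  then obtain m0 m1 m2 where "\<sigma> permutes {0, 1, 2}" "is_mobius m0" "is_mobius m1" "is_mobius m2"
    and F: "\<And>p. F p = (m0 (coord p (\<sigma> 0)), m1 (coord p (\<sigma> 1)), m2 (coord p (\<sigma> 2)))"
    unfolding aut_with_perm_def by blast
  define M where "M i = (if i = 0 then m0 else if i = 1 then m1 else m2)" for i :: nat
  have "is_mobius (M i)" for i
    by (simp add: M_def \<open>is_mobius m0\<close> \<open>is_mobius m1\<close> \<open>is_mobius m2\<close>)
  moreover have "coord (F p) i = M i (coord p (\<sigma> i))" if "i \<in> {0, 1, 2}" for p i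
    using that by (auto simp: F M_def coord_def)
  ultimately show "\<sigma> permutes {0, 1, 2} \<and>
     (\<exists>M. (\<forall>i. is_mobius (M i)) \<and> (\<forall>p. \<forall>i\<in>{0, 1, 2}. coord (F p) i = M i (coord p (\<sigma> i))))"
    using \<open>\<sigma> permutes {0, 1, 2}\<close> by blast
next
  assume "\<sigma> permutes {0, 1, 2} \<and>
     (\<exists>M. (\<forall>i. is_mobius (M i)) \<and> (\<forall>p. \<forall>i\<in>{0, 1, 2}. coord (F p) i = M i (coord p (\<sigma> i))))"
  then obtain M where "\<sigma> permutes {0, 1, 2}" "\<And>i. is_mobius (M i)"
    and F: "\<And>p i. i \<in> {0, 1, 2} \<Longrightarrow> coord (F p) i = M i (coord p (\<sigma> i))"
    by blast
  moreover have "F p = (M 0 (coord p (\<sigma> 0)), M 1 (coord p (\<sigma> 1)), M 2 (coord p (\<sigma> 2)))" for p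
    using triple_coord[of "F p"] F[of 0 p] F[of 1 p] F[of 2 p] by simp
  ultimately show "aut_with_perm F \<sigma>"
    unfolding aut_with_perm_def by (intro conjI exI[of _ "M 0"] exI[of _ "M 1"] exI[of _ "M 2"]) auto
qed

lemma aut_with_perm_id: "aut_with_perm id id"
  unfolding aut_with_perm_def using is_mobius_id
  by (intro conjI permutes_id exI[of _ id]) (simp_all add: coord_def)

lemma aut_with_perm_comp:
  assumes "aut_with_perm F \<sigma>" "aut_with_perm F' \<tau>"
  shows "aut_with_perm (F \<circ> F') (\<tau> \<circ> \<sigma>)"
proof -
  obtain M where \<sigma>: "\<sigma> permutes {0, 1, 2}" and M: "\<And>i. is_mobius (M i)"
    and F: "\<And>p i. i \<in> {0, 1, 2} \<Longrightarrow> coord (F p) i = M i (coord p (\<sigma> i))"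
    using assms(1) unfolding aut_with_perm_iff_coord by blast
  obtain M' where \<tau>: "\<tau> permutes {0, 1, 2}" and M': "\<And>i. is_mobius (M' i)"
    and F': "\<And>p i. i \<in> {0, 1, 2} \<Longrightarrow> coord (F' p) i = M' i (coord p (\<tau> i))"
    using assms(2) unfolding aut_with_perm_iff_coord by blast
  have "coord ((F \<circ> F') p) i = (M i \<circ> M' (\<sigma> i)) (coord p ((\<tau> \<circ> \<sigma>) i))"
    if "i \<in> {0, 1, 2}" for p i
    using that F F' permutes_in_image[OF \<sigma>] by simp
  moreover have "is_mobius (M i \<circ> M' (\<sigma> i))" for i
    using M M' by (rule is_mobius_comp)
  ultimately show ?thesis
    unfolding aut_with_perm_iff_coord
    by (intro conjI permutes_compose[OF \<sigma> \<tau>] exI[of _ "\<lambda>i. M i \<circ> M' (\<sigma> i)"]) simp_all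
qed

lemma aut_with_perm_funpow:
  assumes "aut_with_perm F \<sigma>"
  shows "aut_with_perm (F ^^ n) (\<sigma> ^^ n)"
proof (induction n)
  case 0
  show ?case by (simp only: funpow.simps(1)) (rule aut_with_perm_id)
next
  case (Suc n)
  show ?case
    unfolding funpow.simps(2)[where f = F] funpow_Suc_right[where f = \<sigma>]
    by (rule aut_with_perm_comp[OF assms Suc])
qed

lemma aut_with_perm_id_imp_id:
  assumes "aut_with_perm id \<sigma>"
  shows "\<sigma> = id"
proof
  fix i
  obtain M where \<sigma>: "\<sigma> permutes {0, 1, 2}"
    and M: "\<And>p i. i \<in> {0, 1, 2} \<Longrightarrow> coord p i = M i (coord p (\<sigma> i))"
    using assms unfolding aut_with_perm_iff_coord id_apply by blast
  show "\<sigma> i = id i"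
  proof (cases "i \<in> {0, 1, 2}")
    case True
    define pt where
      "pt a = (if i = 0 then a else Inf, if i = 1 then a else Inf, if i = 2 then a else Inf)" for a
    have pt: "coord (pt a) j = (if j = i then a else Inf)" if "j \<in> {0, 1, 2}" for a j
      using that True by (auto simp: pt_def coord_def)
    have "\<sigma> i \<in> {0, 1, 2}"
      using permutes_in_image[OF \<sigma>] True by simp
    show ?thesis
    proof (rule ccontr)
      assume "\<sigma> i \<noteq> id i"
      then have "a = M i Inf" for a
        using M[OF True, of "pt a"] pt[OF True] pt[OF \<open>\<sigma> i \<in> {0, 1, 2}\<close>] by simp
      from this[of Inf] this[of "Fin 0"] show False by simp
    qed
  next
    case False
    then show ?thesis using permutes_not_in[OF \<sigma>] by simp
  qed
qed

lemma perm3_order_dvd_9_shift_power: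
  fixes \<sigma> :: "nat \<Rightarrow> nat"
  assumes \<sigma>: "\<sigma> permutes {0, 1, 2}" and "\<sigma> \<noteq> id" and "\<sigma> ^^ 9 = id"
  obtains k where "(\<sigma> ^^ k) 0 = 1" "(\<sigma> ^^ k) 1 = 2" "(\<sigma> ^^ k) 2 = 0"
proof -
  have in_range: "\<sigma> i = 0 \<or> \<sigma> i = 1 \<or> \<sigma> i = 2" if "i \<in> {0, 1, 2}" for i
    using permutes_in_image[OF \<sigma>] that by simp
  have distinct: "\<sigma> 0 \<noteq> \<sigma> 1" "\<sigma> 0 \<noteq> \<sigma> 2" "\<sigma> 1 \<noteq> \<sigma> 2"
    using permutes_inj[OF \<sigma>] by (simp_all add: inj_eq)
  have not_id: "\<not> (\<sigma> 0 = 0 \<and> \<sigma> 1 = 1 \<and> \<sigma> 2 = 2)"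
  proof
    assume "\<sigma> 0 = 0 \<and> \<sigma> 1 = 1 \<and> \<sigma> 2 = 2"
    then have "\<sigma> i = i" for i
      using permutes_not_in[OF \<sigma>, of i] by (cases "i \<in> {0, 1, 2}") auto
    with \<open>\<sigma> \<noteq> id\<close> show False by auto
  qed
  have period: "\<sigma> (\<sigma> (\<sigma> (\<sigma> (\<sigma> (\<sigma> (\<sigma> (\<sigma> (\<sigma> i)))))))) = i" for i
    using fun_cong[OF \<open>\<sigma> ^^ 9 = id\<close>, of i] by (simp add: numeral_eq_Suc)
  \<comment> \<open>the transpositions violate the period, so \<sigma> is one of the two 3-cycles\<close>
  from in_range[of 0, simplified] in_range[of 1, simplified] in_range[of 2, simplified]
  have "(\<sigma> 0, \<sigma> 1, \<sigma> 2) = (1, 2, 0) \<or> (\<sigma> 0, \<sigma> 1, \<sigma> 2) = (2, 0, 1)"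
    using period[of 0] period[of 1] period[of 2] distinct not_id by (elim disjE) simp_all
  then show thesis
  proof
    assume "(\<sigma> 0, \<sigma> 1, \<sigma> 2) = (1, 2, 0)"
    then show thesis using that[of 1] by simp
  next
    assume "(\<sigma> 0, \<sigma> 1, \<sigma> 2) = (2, 0, 1)"
    then show thesis using that[of 2] by (simp add: numeral_2_eq_2)
  qed
qed

lemma infinite_UNIV_P1: "infinite (UNIV :: P1 set)"
proof
  assume "finite (UNIV :: P1 set)"
  then have "finite (range Fin)"
    by (rule finite_subset[rotated]) simp
  moreover have "inj Fin"
    by (auto intro: injI)
  ultimately have "finite (UNIV :: complex set)"
    by (rule finite_imageD)
  then show False
    using infinite_UNIV_char_0 by blast
qed

locale mobius_shift =
  fixes F :: "P1cube \<Rightarrow> P1cube" and m0 m1 m2 :: "P1 \<Rightarrow> P1"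
  assumes mobius: "is_mobius m0" "is_mobius m1" "is_mobius m2"
    and F_eq: "F (x, y, z) = (m0 y, m1 z, m2 x)"
begin

lemma shift_ne_id: "F \<noteq> id"
proof
  assume "F = id"
  then have "F (Inf, Fin 0, Fin 0) = (Inf, Fin 0, Fin 0)" "F (Fin 0, Fin 0, Fin 0) = (Fin 0, Fin 0, Fin 0)"
    by simp_all
  then show False
    by (simp add: F_eq)
qed

lemma funpow_3_mult:
  "(F ^^ (3 * k)) (x, y, z) =
    (((m0 \<circ> m1 \<circ> m2) ^^ k) x, ((m1 \<circ> m2 \<circ> m0) ^^ k) y, ((m2 \<circ> m0 \<circ> m1) ^^ k) z)"
proof (induction k arbitrary: x y z)
  case (Suc k)
  have "(F ^^ (3 * Suc k)) (x, y, z) = (F ^^ 3) ((F ^^ (3 * k)) (x, y, z))"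
    by (simp only: mult_Suc_right funpow_add comp_apply)
  also have "\<dots> =
    (F ^^ 3) (((m0 \<circ> m1 \<circ> m2) ^^ k) x, ((m1 \<circ> m2 \<circ> m0) ^^ k) y, ((m2 \<circ> m0 \<circ> m1) ^^ k) z)"
    by (simp only: Suc.IH)
  finally show ?case
    by (simp add: numeral_3_eq_3 F_eq comp_def)
qed simp

lemma return_map_ne_id:
  assumes "finite {p. F p = p}"
  shows "m0 \<circ> m1 \<circ> m2 \<noteq> id"
proof
  assume "m0 \<circ> m1 \<circ> m2 = id"
  then have "F (x, m1 (m2 x), m2 x) = (x, m1 (m2 x), m2 x)" for x
    by (simp add: F_eq fun_eq_iff)
  then have "range (\<lambda>x. (x, m1 (m2 x), m2 x)) \<subseteq> {p. F p = p}"
    by auto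
  with assms have "finite (range (\<lambda>x. (x, m1 (m2 x), m2 x)))"
    by (rule finite_subset[rotated])
  moreover have "inj (\<lambda>x. (x, m1 (m2 x), m2 x))"
    by (auto intro: injI)
  ultimately have "finite (UNIV :: P1 set)"
    by (rule finite_imageD)
  with infinite_UNIV_P1 show False ..
qed

lemma funpow_3_ne_id:
  assumes "finite {p. F p = p}"
  shows "F ^^ 3 \<noteq> id"
proof
  assume "F ^^ 3 = id"
  then have "(m0 \<circ> m1 \<circ> m2) x = x" for x
    using funpow_3_mult[of 1 x Inf Inf] by simp
  with return_map_ne_id[OF assms] show False
    by auto
qed

lemma conj_model_map:
  assumes "finite {p. F p = p}" and "F ^^ (3 * n) = id" and "0 < n"
  shows "\<exists>\<omega> H. \<omega> ^ n = 1 \<and> \<omega> \<noteq> 1 \<and> is_aut H \<and> bij H \<and> (\<forall>p. H (F p) = model_map \<omega> (H p))"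
proof -
  have "((m0 \<circ> m1 \<circ> m2) ^^ n) x = x" for x
    using funpow_3_mult[of n x Inf Inf] assms(2) by simp
  then obtain \<omega> \<mu> where \<omega>: "\<omega> ^ n = 1" "\<omega> \<noteq> 1" and \<mu>: "is_mobius \<mu>"
      and conj: "\<And>x. \<mu> ((m0 \<circ> m1 \<circ> m2) x) = mob \<omega> 0 0 1 (\<mu> x)"
    using mobius_finite_order[of "m0 \<circ> m1 \<circ> m2" n] mobius is_mobius_comp
      return_map_ne_id[OF assms(1)] \<open>0 < n\<close> by (metis eq_id_iff)
  \<comment> \<open>H straightens the first two components of F, leaving only the conjugated return map\<close>
  define H where "H = map_prod \<mu> (map_prod (\<mu> \<circ> m0) (\<mu> \<circ> m0 \<circ> m1))"
  have mobius_H: "is_mobius (\<mu> \<circ> m0)" "is_mobius (\<mu> \<circ> m0 \<circ> m1)"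
    using \<mu> mobius by (simp_all add: is_mobius_comp)
  have "aut_with_perm H id"
    unfolding aut_with_perm_def using \<mu> mobius_H
    by (intro conjI permutes_id exI[of _ \<mu>] exI[of _ "\<mu> \<circ> m0"] exI[of _ "\<mu> \<circ> m0 \<circ> m1"])
      (auto simp: H_def coord_def map_prod_def split: prod.splits)
  moreover have "bij H"
    unfolding H_def using \<mu> mobius_H
    by (metis is_mobius_bij bij_betw_map_prod UNIV_Times_UNIV)
  moreover have "H (F p) = model_map \<omega> (H p)" for p
    using conj by (cases p) (simp add: H_def F_eq model_map_def)
  ultimately show ?thesis
    using \<omega> unfolding is_aut_def by blast
qed

end

lemma aut_with_perm_shift:
  assumes "aut_with_perm F \<sigma>" and "\<sigma> 0 = 1" "\<sigma> 1 = 2" "\<sigma> 2 = 0"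
  obtains m0 m1 m2 where "mobius_shift F m0 m1 m2"
proof -
  obtain m0 m1 m2 where "is_mobius m0" "is_mobius m1" "is_mobius m2"
    and "\<And>p. F p = (m0 (coord p (\<sigma> 0)), m1 (coord p (\<sigma> 1)), m2 (coord p (\<sigma> 2)))"
    using assms(1) unfolding aut_with_perm_def by blast
  with assms(2-4) have "mobius_shift F m0 m1 m2"
    by unfold_locales (simp_all add: coord_def)
  then show thesis ..
qed

section \<open>Group actions and cyclic groups\<close>

lemma aut_action_nat_pow:
  assumes "aut_action G \<phi>" and "monoid G" and "g \<in> carrier G"
  shows "\<phi> (g [^]\<^bsub>G\<^esub> n) = \<phi> g ^^ n"
proof (induction n)
  case 0
  then show ?case using assms(1) unfolding aut_action_def by simp
next
  case (Suc n)
  have "\<phi> (g [^]\<^bsub>G\<^esub> Suc n) = \<phi> (g [^]\<^bsub>G\<^esub> n) \<circ> \<phi> g"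
    using assms monoid.nat_pow_closed[OF assms(2)] unfolding aut_action_def
    by (simp add: monoid.nat_pow_Suc[OF assms(2)])
  with Suc show ?case
    by (simp only: funpow_Suc_right)
qed

lemma (in group) ord_eq_order_of_prime_power:
  fixes p :: nat
  assumes "finite (carrier G)" and "Factorial_Ring.prime p" and "order G = p ^ Suc k"
    and "g \<in> carrier G" and "g [^] (p ^ k) \<noteq> \<one>"
  shows "ord g = order G"
proof -
  have "ord g dvd p ^ Suc k"
    using ord_dvd_group_order[OF \<open>g \<in> carrier G\<close>] \<open>order G = p ^ Suc k\<close> by simp
  then obtain i where "i \<le> Suc k" and ord_g: "ord g = p ^ i"
    using divides_primepow_nat[OF \<open>Factorial_Ring.prime p\<close>] by blast
  have "\<not> i \<le> k"
  proof
    assume "i \<le> k"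
    then have "ord g dvd p ^ k"
      by (simp add: ord_g le_imp_power_dvd)
    with assms(4,5) show False
      by (simp add: pow_eq_id)
  qed
  with \<open>i \<le> Suc k\<close> ord_g \<open>order G = p ^ Suc k\<close> show ?thesis
    by (simp add: le_Suc_eq)
qed

lemma (in group) generate_eq_carrier_if_ord_eq_order:
  assumes "finite (carrier G)" and "g \<in> carrier G" and "ord g = order G"
  shows "generate G {g} = carrier G"
proof (rule card_subset_eq[OF assms(1)])
  show "generate G {g} \<subseteq> carrier G"
    using assms(2) by (intro generate_incl) simp
  show "card (generate G {g}) = card (carrier G)"
    using generate_pow_card[OF assms(2)] assms(3) unfolding order_def by simp
qed

lemma (in group) iso_integer_mod_group_if_ord_eq_order:
  assumes "finite (carrier G)" and g: "g \<in> carrier G" and ord_g: "ord g = order G"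
  shows "G \<cong> integer_mod_group (order G)"
proof -
  define n where "n = order G"
  have "n > 0"
    using assms(1) unfolding n_def by (simp add: order_gt_0_iff_finite)
  define h where "h k = g [^] (k :: int)" for k
  have carrier_mod: "carrier (integer_mod_group n) = {0..<int n}"
    using \<open>n > 0\<close> by (simp add: carrier_integer_mod_group)
  have pow_eq: "h k = h l \<longleftrightarrow> int n dvd (l - k)" for k l
    unfolding h_def n_def using int_pow_eq[OF g] ord_g by simp
  have "h \<in> hom (integer_mod_group n) G"
  proof (rule homI)
    fix k l
    show "h k \<in> carrier G" unfolding h_def using g by simp
    have "h ((k + l) mod int n) = h (k + l)"
      unfolding pow_eq by (rule dvd_minus_mod)
    then show "h (k \<otimes>\<^bsub>integer_mod_group n\<^esub> l) = h k \<otimes> h l"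
      unfolding h_def using g by (simp add: int_pow_mult)
  qed
  moreover have inj: "inj_on h {0..<int n}"
  proof (rule inj_onI)
    fix k l assume "k \<in> {0..<int n}" "l \<in> {0..<int n}" "h k = h l"
    then have "int n dvd (l - k)" and "\<bar>l - k\<bar> < int n"
      using pow_eq by (simp_all add: abs_less_iff)
    then have "l - k = 0"
      using dvd_imp_le_int[of "l - k" "int n"] by linarith
    then show "k = l"
      by simp
  qed
  moreover have "h ` {0..<int n} = carrier G"
  proof (rule card_subset_eq[OF assms(1)])
    show "h ` {0..<int n} \<subseteq> carrier G" unfolding h_def using g by auto
    show "card (h ` {0..<int n}) = card (carrier G)"
      using card_image[OF inj] unfolding n_def order_def by simp
  qed
  ultimately have "h \<in> iso (integer_mod_group n) G"
    by (intro isoI) (simp_all add: carrier_mod bij_betw_def)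
  then have "integer_mod_group n \<cong> G"
    by (rule is_isoI)
  then show ?thesis
    unfolding n_def using group.iso_sym[OF group_integer_mod_group] by blast
qed

lemma free_outside_finite_fixpoints:
  assumes "free_outside_finite G \<phi>" and "aut_action G \<phi>" and "g \<in> carrier G" and "\<phi> g \<noteq> id"
  shows "finite {p. \<phi> g p = p}"
proof -
  have "g \<noteq> \<one>\<^bsub>G\<^esub>"
    using assms(2,4) by (auto simp: aut_action_def)
  with assms(3) have "{p. \<phi> g p = p} \<subseteq> {p. \<exists>g\<in>carrier G. g \<noteq> \<one>\<^bsub>G\<^esub> \<and> \<phi> g p = p}"
    by (intro subsetI CollectI bexI[of _ g]) simp_all
  then show ?thesis
    using assms(1) unfolding free_outside_finite_def by (rule finite_subset)
qed

lemma shift_element_exists: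
  assumes "group G" and "aut_action G \<phi>" and "permutes_factors_nontrivially G \<phi>"
    and period: "\<And>x. x \<in> carrier G \<Longrightarrow> \<phi> x ^^ 9 = id"
  obtains h m0 m1 m2 where "h \<in> carrier G" "mobius_shift (\<phi> h) m0 m1 m2"
proof -
  interpret G: group G by fact
  obtain g \<sigma> where g: "g \<in> carrier G" and \<sigma>: "aut_with_perm (\<phi> g) \<sigma>" "\<sigma> \<noteq> id"
    using assms(3) unfolding permutes_factors_nontrivially_def by blast
  have "\<sigma> ^^ 9 = id"
    using aut_with_perm_funpow[OF \<sigma>(1), of 9] period[OF g] by (simp add: aut_with_perm_id_imp_id)
  then obtain k where shift: "(\<sigma> ^^ k) 0 = 1" "(\<sigma> ^^ k) 1 = 2" "(\<sigma> ^^ k) 2 = 0"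
    using perm3_order_dvd_9_shift_power \<sigma> unfolding aut_with_perm_def by blast
  have "g [^]\<^bsub>G\<^esub> k \<in> carrier G"
    using g by simp
  moreover have "aut_with_perm (\<phi> (g [^]\<^bsub>G\<^esub> k)) (\<sigma> ^^ k)"
    using aut_action_nat_pow[OF assms(2) G.monoid_axioms g] aut_with_perm_funpow[OF \<sigma>(1)] by simp
  then obtain m0 m1 m2 where "mobius_shift (\<phi> (g [^]\<^bsub>G\<^esub> k)) m0 m1 m2"
    using aut_with_perm_shift[OF _ shift] by blast
  ultimately show thesis
    by (rule that)
qed

theorem lemma5p6:
  fixes G :: "('g, 'b) monoid_scheme" and \<phi> :: "'g \<Rightarrow> P1cube \<Rightarrow> P1cube"
  assumes "group G" and "finite (carrier G)" and "order G = 9"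
    and "aut_action G \<phi>"
    and "free_outside_finite G \<phi>"
    and "permutes_factors_nontrivially G \<phi>"
  shows "G \<cong> integer_mod_group 9 \<and>
    (\<exists>g\<in>carrier G. generate G {g} = carrier G \<and>
      (\<exists>\<omega> H. \<omega> ^ 3 = 1 \<and> \<omega> \<noteq> 1 \<and> is_aut H \<and> bij H \<and>
         (\<forall>p. H (\<phi> g p) = model_map \<omega> (H p))))"
proof -
  interpret G: group G by fact
  have pow: "\<phi> (x [^]\<^bsub>G\<^esub> n) = \<phi> x ^^ n" if "x \<in> carrier G" for x and n :: nat
    using aut_action_nat_pow[OF assms(4) G.monoid_axioms that] .
  have one: "\<phi> \<one>\<^bsub>G\<^esub> = id"
    using assms(4) by (simp add: aut_action_def)
  have period: "\<phi> x ^^ 9 = id" if "x \<in> carrier G" for x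
    using pow[OF that, of 9] G.pow_order_eq_1[OF that] assms(3) one by simp
  obtain h m0 m1 m2 where h: "h \<in> carrier G" and "mobius_shift (\<phi> h) m0 m1 m2"
    using shift_element_exists[OF assms(1,4,6) period] by blast
  interpret mobius_shift "\<phi> h" m0 m1 m2 by fact
  have fixpoints: "finite {p. \<phi> h p = p}"
    using free_outside_finite_fixpoints[OF assms(5,4) h shift_ne_id] .
  have "h [^]\<^bsub>G\<^esub> (3 :: nat) \<noteq> \<one>\<^bsub>G\<^esub>"
    using funpow_3_ne_id[OF fixpoints] pow[OF h, of 3] one by auto
  then have "G.ord h = order G"
    using G.ord_eq_order_of_prime_power[of 3 1 h] assms(2,3) h by simp
  moreover have
    "\<exists>\<omega> H. \<omega> ^ 3 = 1 \<and> \<omega> \<noteq> 1 \<and> is_aut H \<and> bij H \<and> (\<forall>p. H (\<phi> h p) = model_map \<omega> (H p))"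
    using conj_model_map[OF fixpoints, of 3] period[OF h] by simp
  ultimately show ?thesis
    using G.iso_integer_mod_group_if_ord_eq_order G.generate_eq_carrier_if_ord_eq_order
      assms(2,3) h by auto
qed

end
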